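(* Let $A$ and $B$ be $J^*$-algebras. Suppose that $h : A \to B$ is a mapping with $h(0)=0$ for which there exists a function $\varphi: A\times A\times A\to [0, \infty)$ such that $$\widetilde{\varphi}(x, y, z):=\frac{1}{2}\sum_{n=0}^\infty 2^{-n}\varphi(2^nx,2^ny,2^nz)<\infty\quad\text{for all } x,y,z\in A,$$ and $$\|h(\mu x+\mu y+zz^*z)-\mu h(x)-\mu h(y)-h(z)h(z)^*h(z)\|\leq \varphi(x,y,z)$$ for $\mu\in\{1,i\}$ and all $x, y, z\in A$. If for each fixed $x\in A$ the function $\mathbb{R}\ni t\mapsto h(tx)\in B$ is continuous, then there exists a unique $J^*$-homomorphism $T : A \to B$ such that $$\|h(x)-T(x)\|\leq\widetilde{\varphi}(x, x, 0)\quad\text{for all } x\in A.$$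
   Context: A $J^*$-algebra is a norm-closed complex linear subspace $A$ of a $C^*$-algebra such that $xx^*x\in A$ whenever $x\in A$ (with the norm, involution and product inherited from the ambient $C^*$-algebra). For $J^*$-algebras $A$ and $B$, a $J^*$-homomorphism is a $\mathbb{C}$-linear mapping $T : A \to B$ such that $T(xx^*x)=T(x)T(x)^*T(x)$ for all $x\in A$. *)

theory Defs
  imports "HOL-Analysis.Analysis"
begin

text \<open>Abstract (not necessarily unital) C*-algebras: complete normed real algebras
  equipped with a complex scalar multiplication extending the real one, and an
  involution satisfying the C*-identity.\<close>

class cstar_algebra = real_normed_algebra + complete_space +
  fixes scaleC :: "complex \<Rightarrow> 'a \<Rightarrow> 'a"
    and star :: "'a \<Rightarrow> 'a"
  assumes scaleC_add_right: "scaleC c (x + y) = scaleC c x + scaleC c y"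
    and scaleC_add_left: "scaleC (c + d) x = scaleC c x + scaleC d x"
    and scaleC_scaleC: "scaleC c (scaleC d x) = scaleC (c * d) x"
    and scaleC_one: "scaleC 1 x = x"
    and scaleC_of_real: "scaleC (complex_of_real r) x = scaleR r x"
    and scaleC_mult_left: "scaleC c (x * y) = scaleC c x * y"
    and scaleC_mult_right: "scaleC c (x * y) = x * scaleC c y"
    and norm_scaleC: "norm (scaleC c x) = cmod c * norm x"
    and star_star: "star (star x) = x"
    and star_add: "star (x + y) = star x + star y"
    and star_scaleC: "star (scaleC c x) = scaleC (cnj c) (star x)"
    and star_mult: "star (x * y) = star y * star x"
    and cstar_identity: "norm (star x * x) = (norm x)\<^sup>2"

definition jstar_algebra :: "'a::cstar_algebra set \<Rightarrow> bool" where
  "jstar_algebra A \<longleftrightarrow>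
     0 \<in> A \<and> (\<forall>x\<in>A. \<forall>y\<in>A. x + y \<in> A) \<and> (\<forall>c. \<forall>x\<in>A. scaleC c x \<in> A)
     \<and> closed A \<and> (\<forall>x\<in>A. x * star x * x \<in> A)"

text \<open>J*-homomorphism from A into B (only the values on A matter).\<close>

definition jstar_hom :: "'a::cstar_algebra set \<Rightarrow> 'b::cstar_algebra set \<Rightarrow> ('a \<Rightarrow> 'b) \<Rightarrow> bool" where
  "jstar_hom A B T \<longleftrightarrow>
     (\<forall>x\<in>A. T x \<in> B)
     \<and> (\<forall>x\<in>A. \<forall>y\<in>A. T (x + y) = T x + T y)
     \<and> (\<forall>c. \<forall>x\<in>A. T (scaleC c x) = scaleC c (T x))
     \<and> (\<forall>x\<in>A. T (x * star x * x) = T x * star (T x) * T x)"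

definition phi_tilde :: "('a::real_vector \<Rightarrow> 'a \<Rightarrow> 'a \<Rightarrow> real) \<Rightarrow> 'a \<Rightarrow> 'a \<Rightarrow> 'a \<Rightarrow> real" where
  "phi_tilde \<phi> x y z =
     (1/2) * (\<Sum>n. (1/2)^n * \<phi> ((2^n) *\<^sub>R x) ((2^n) *\<^sub>R y) ((2^n) *\<^sub>R z))"

end

theory Submission
  imports Defs
begin

text \<open>Hyers' direct method. The instance \<open>\<mu> = 1, y = x, z = 0\<close> of the hypothesis says that
  \<open>h\<close> is approximately additive, so \<open>T x = lim (1/2)\<^sup>n h (2\<^sup>n x)\<close> exists: the increments of
  the sequence are dominated by the terms of the series defining \<open>phi_tilde \<phi> x x 0\<close>, which
  therefore also bounds \<open>h x - T x\<close>. The other instances of the hypothesis, rescaled by \<open>2\<^sup>n\<close>,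
  pass to the limit and show that \<open>T\<close> is additive, commutes with multiplication by \<open>\<i>\<close> and
  preserves the triple product. Real homogeneity is where continuity of \<open>t \<mapsto> h (t x)\<close> enters:
  \<open>t \<mapsto> T (t x)\<close> is additive and a pointwise limit of continuous functions, so by Baire's
  theorem it is bounded on some interval, and an additive function bounded on an interval is
  linear. Two maps with the stated properties are real homogeneous, so at \<open>x\<close> they differ by at
  most \<open>(1/2)\<^sup>n \<cdot> 2 phi_tilde \<phi> (2\<^sup>n x) (2\<^sup>n x) 0\<close>, which is a tail of a convergent series.\<close>

lemma pointwise_limit_of_continuous_locally_bounded:
  fixes F :: "nat \<Rightarrow> 'a::complete_space \<Rightarrow> 'b::real_normed_vector"
  assumes cont: "\<And>n. continuous_on UNIV (F n)"
    and lim: "\<And>t. (\<lambda>n. F n t) \<longlonglongrightarrow> G t"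
  shows "\<exists>a e K. e > 0 \<and> (\<forall>t\<in>ball a e. norm (G t) \<le> K)"
proof -
  define C where "C m = {t. \<forall>n. norm (F n t) \<le> real m}" for m :: nat
  have closed_C: "closed (C m)" for m
  proof -
    have "C m = (\<Inter>n. {t. norm (F n t) \<le> real m})" unfolding C_def by auto
    moreover have "closed {t. norm (F n t) \<le> real m}" for n
      by (intro closed_Collect_le continuous_on_norm cont continuous_on_const)
    ultimately show ?thesis by auto
  qed
  have "\<exists>m. t \<in> C m" for t
  proof -
    have "Bseq (\<lambda>n. F n t)" using lim[of t] by (intro convergent_imp_Bseq convergentI)
    then obtain K where "\<And>n. norm (F n t) \<le> K" unfolding Bseq_def by auto
    moreover obtain m :: nat where "K \<le> real m" using real_arch_simple by blast
    ultimately show ?thesis unfolding C_def by (auto intro: order_trans)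
  qed
  then have covers: "\<Union>(range C) = UNIV" by auto
  have "\<exists>m. interior (C m) \<noteq> {}"
  proof (rule ccontr)
    assume "\<nexists>m. interior (C m) \<noteq> {}"
    then have "euclidean interior_of \<Union>(range C) = {}"
      using closed_C unfolding closed_closedin
      by (intro Baire_category_alt disjI1 completely_metrizable_space_euclidean) auto
    then show False using covers by (simp add: euclidean_interior_of)
  qed
  then obtain m a where "a \<in> interior (C m)" by blast
  moreover have "open (interior (C m))" by simp
  ultimately obtain e where "e > 0" "ball a e \<subseteq> interior (C m)"
    by (meson open_contains_ball)
  then have "e > 0" "ball a e \<subseteq> C m" using interior_subset by blast+
  moreover have "norm (G t) \<le> real m" if "t \<in> C m" for t
    by (rule Lim_norm_ubound[OF _ lim[of t]]) (use that in \<open>auto simp: C_def\<close>)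
  ultimately show ?thesis by blast
qed

lemma additive_of_int_mult:
  fixes G :: "real \<Rightarrow> 'b::real_vector"
  assumes add: "\<And>s t. G (s + t) = G s + G t"
  shows "G (of_int k * t) = of_int k *\<^sub>R G t"
proof -
  interpret additive G by standard (fact add)
  have nat: "G (real n * t) = real n *\<^sub>R G t" for n
    by (induction n) (simp_all add: zero add distrib_right scaleR_add_left)
  show ?thesis
  proof (cases "k \<ge> 0")
    case True
    then show ?thesis using nat[of "nat k"] by simp
  next
    case False
    then show ?thesis using nat[of "nat (- k)"] minus[of "real (nat (- k)) * t"] by simp
  qed
qed

lemma additive_bounded_on_unit_interval_imp_linear:
  fixes G :: "real \<Rightarrow> 'b::real_normed_vector"
  assumes add: "\<And>s t. G (s + t) = G s + G t"
    and bounded: "\<And>u. 0 \<le> u \<Longrightarrow> u < 1 \<Longrightarrow> norm (G u) \<le> K"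
  shows "G r = r *\<^sub>R G 1"
proof -
  interpret additive G by standard (fact add)
  define c where "c = norm (G r - r *\<^sub>R G 1)"
  have "real N * c \<le> K + norm (G 1)" for N :: nat
  proof -
    define k where "k = \<lfloor>real N * r\<rfloor>"
    define u where "u = real N * r - of_int k"
    have u: "0 \<le> u" "u < 1" unfolding u_def k_def by linarith+
    have "real N *\<^sub>R (G r - r *\<^sub>R G 1) = G (of_int k * 1 + u) - (of_int k + u) *\<^sub>R G 1"
      using additive_of_int_mult[OF add, of "int N" r]
      by (simp add: u_def scaleR_diff_right)
    also have "\<dots> = G u - u *\<^sub>R G 1"
      using additive_of_int_mult[OF add, of k 1] by (simp add: add scaleR_add_left)
    finally have "real N * c = norm (G u - u *\<^sub>R G 1)"
      unfolding c_def by (metis abs_of_nonneg norm_scaleR of_nat_0_le_iff)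
    also have "\<dots> \<le> norm (G u) + norm (u *\<^sub>R G 1)" by (rule norm_triangle_ineq4)
    also have "\<dots> \<le> K + norm (G 1)"
      using bounded[OF u] u by (auto intro!: add_mono mult_left_le_one_le)
    finally show ?thesis .
  qed
  moreover have "\<exists>N. K + norm (G 1) < real N * c" if "c > 0"
    using ex_less_of_nat_mult[OF that] by simp
  ultimately have "c \<le> 0" by (meson not_le)
  then show ?thesis unfolding c_def by simp
qed

lemma additive_locally_bounded_imp_linear:
  fixes G :: "real \<Rightarrow> 'b::real_normed_vector"
  assumes add: "\<And>s t. G (s + t) = G s + G t"
    and "e > 0" and bounded: "\<And>t. t \<in> ball a e \<Longrightarrow> norm (G t) \<le> K"
  shows "G r = r *\<^sub>R G 1"
proof -
  obtain M :: nat where "1 / e < real M" using reals_Archimedean2 by blast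
  moreover have "0 < 1 / e" using \<open>e > 0\<close> by simp
  ultimately have M: "real M > 0" by linarith
  then have "1 / real M < e"
    using \<open>1 / e < real M\<close> \<open>e > 0\<close> by (simp add: field_simps)
  have "norm (G u) \<le> real M * (K + K)" if "0 \<le> u" "u < 1" for u
  proof -
    have "\<bar>u / real M\<bar> < e"
      using that M \<open>1 / real M < e\<close> by (simp add: field_simps)
    then have "norm (G (a + u / real M)) \<le> K" "norm (G a) \<le> K"
      using \<open>e > 0\<close> by (auto intro!: bounded simp: dist_real_def)
    moreover have "G (u / real M) = G (a + u / real M) - G a" using add by (simp add: eq_diff_eq)
    then have "norm (G (u / real M)) \<le> norm (G (a + u / real M)) + norm (G a)"
      by (simp only: norm_triangle_ineq4)
    ultimately have "norm (G (u / real M)) \<le> K + K" by linarith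
    moreover have "G u = real M *\<^sub>R G (u / real M)"
      using additive_of_int_mult[OF add, of "int M" "u / real M"] M by simp
    ultimately show ?thesis using M by (simp add: mult_left_mono)
  qed
  then show ?thesis by (rule additive_bounded_on_unit_interval_imp_linear[OF add])
qed

lemma additive_limit_of_continuous_imp_linear:
  fixes G :: "real \<Rightarrow> 'b::real_normed_vector"
  assumes add: "\<And>s t. G (s + t) = G s + G t"
    and "\<And>n. continuous_on UNIV (F n)" and "\<And>t. (\<lambda>n. F n t) \<longlonglongrightarrow> G t"
  shows "G r = r *\<^sub>R G 1"
proof -
  obtain a e K where "e > 0" "\<And>t. t \<in> ball a e \<Longrightarrow> norm (G t) \<le> K"
    using pointwise_limit_of_continuous_locally_bounded[OF assms(2,3)] by blast
  then show ?thesis by (rule additive_locally_bounded_imp_linear[OF add])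
qed

context cstar_algebra
begin

subclass banach ..

lemma scaleC_zero [simp]: "scaleC c 0 = 0"
  using scaleC_add_right[of c 0 0] by simp

lemma star_scaleR: "star (r *\<^sub>R x) = r *\<^sub>R star x"
  using star_scaleC[of "complex_of_real r" x] by (simp add: scaleC_of_real)

lemma scaleC_scaleR: "scaleC c (r *\<^sub>R x) = r *\<^sub>R scaleC c x"
  by (metis scaleC_of_real scaleC_scaleC mult.commute)

lemma scaleC_eq_Re_Im: "scaleC c x = Re c *\<^sub>R x + Im c *\<^sub>R scaleC \<i> x"
proof -
  have "c = complex_of_real (Re c) + complex_of_real (Im c) * \<i>"
    by (simp add: complex_eq_iff)
  then have "scaleC c x = scaleC (complex_of_real (Re c)) x + scaleC (complex_of_real (Im c)) (scaleC \<i> x)"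
    by (metis scaleC_add_left scaleC_scaleC)
  then show ?thesis by (simp add: scaleC_of_real)
qed

lemma norm_star: "norm (star x) = norm x"
proof -
  have "norm y \<le> norm (star y)" for y
  proof (cases "y = 0")
    case False
    have "(norm y)\<^sup>2 \<le> norm (star y) * norm y"
      using cstar_identity[of y] norm_mult_ineq[of "star y" y] by simp
    then show ?thesis using False by (simp add: power2_eq_square)
  qed simp
  from this[of x] this[of "star x"] show ?thesis by (simp add: star_star)
qed

end

lemma bounded_linear_star: "bounded_linear (star :: 'a::cstar_algebra \<Rightarrow> 'a)"
  by (rule bounded_linear_intro[where K=1]) (simp_all add: star_add star_scaleR norm_star)

lemma bounded_linear_scaleC: "bounded_linear (scaleC c :: 'a::cstar_algebra \<Rightarrow> 'a)"
  by (rule bounded_linear_intro[where K="cmod c"])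
    (simp_all add: scaleC_add_right scaleC_scaleR norm_scaleC mult.commute)

lemma jstar_algebra_zero: "jstar_algebra A \<Longrightarrow> 0 \<in> A"
  and jstar_algebra_add: "jstar_algebra A \<Longrightarrow> x \<in> A \<Longrightarrow> y \<in> A \<Longrightarrow> x + y \<in> A"
  and jstar_algebra_scaleC: "jstar_algebra A \<Longrightarrow> x \<in> A \<Longrightarrow> scaleC c x \<in> A"
  and jstar_algebra_triple: "jstar_algebra A \<Longrightarrow> x \<in> A \<Longrightarrow> x * star x * x \<in> A"
  and jstar_algebra_closed: "jstar_algebra A \<Longrightarrow> closed A"
  by (simp_all add: jstar_algebra_def)

lemma jstar_algebra_scaleR: "jstar_algebra A \<Longrightarrow> x \<in> A \<Longrightarrow> r *\<^sub>R x \<in> A"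
  by (metis jstar_algebra_scaleC scaleC_of_real)

lemma jstar_hom_scaleR: "jstar_hom A B T \<Longrightarrow> x \<in> A \<Longrightarrow> T (r *\<^sub>R x) = r *\<^sub>R T x"
  unfolding jstar_hom_def by (metis scaleC_of_real)

definition hyers_seq :: "('a::real_vector \<Rightarrow> 'b::real_vector) \<Rightarrow> nat \<Rightarrow> 'a \<Rightarrow> 'b" where
  "hyers_seq f n x = (1/2)^n *\<^sub>R f (2^n *\<^sub>R x)"

definition hyers_limit :: "('a::real_vector \<Rightarrow> 'b::real_normed_vector) \<Rightarrow> 'a \<Rightarrow> 'b" where
  "hyers_limit f x = lim (\<lambda>n. hyers_seq f n x)"

lemma hyers_seq_0 [simp]: "hyers_seq f 0 x = f x"
  by (simp add: hyers_seq_def)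

lemma hyers_seq_Suc_diff:
  "hyers_seq f (Suc n) x - hyers_seq f n x
     = (1/2)^Suc n *\<^sub>R (f (2 *\<^sub>R (2^n *\<^sub>R x)) - 2 *\<^sub>R f (2^n *\<^sub>R x))"
  by (simp add: hyers_seq_def scaleR_diff_right)

lemma hyers_seq_converges:
  fixes f :: "'a::real_vector \<Rightarrow> 'b::banach"
  assumes approx: "\<And>n. norm (f (2 *\<^sub>R (2^n *\<^sub>R x)) - 2 *\<^sub>R f (2^n *\<^sub>R x)) \<le> \<psi> (2^n *\<^sub>R x)"
    and summable: "summable (\<lambda>n. (1/2)^n * \<psi> (2^n *\<^sub>R x))"
  shows "(\<lambda>n. hyers_seq f n x) \<longlonglongrightarrow> hyers_limit f x"
    and "norm (f x - hyers_limit f x) \<le> (1/2) * (\<Sum>n. (1/2)^n * \<psi> (2^n *\<^sub>R x))"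
proof -
  define d where "d n = hyers_seq f (Suc n) x - hyers_seq f n x" for n
  have norm_d: "norm (d n) \<le> (1/2) * ((1/2)^n * \<psi> (2^n *\<^sub>R x))" for n
    using mult_left_mono[OF approx[of n], of "(1/2)^Suc n"]
    by (simp add: d_def hyers_seq_Suc_diff)
  have summable_half: "summable (\<lambda>n. (1/2) * ((1/2)^n * \<psi> (2^n *\<^sub>R x)))"
    using summable by (rule summable_mult)
  have summable_norm_d: "summable (\<lambda>n. norm (d n))"
    by (rule summable_comparison_test[OF _ summable_half]) (use norm_d in auto)
  have "(\<lambda>n. \<Sum>k<n. d k) \<longlonglongrightarrow> suminf d"
    by (rule summable_LIMSEQ[OF summable_norm_cancel[OF summable_norm_d]])
  moreover have "(\<Sum>k<n. d k) = hyers_seq f n x - f x" for n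
    using sum_lessThan_telescope[of "\<lambda>n. hyers_seq f n x" n] by (simp add: d_def)
  ultimately have "(\<lambda>n. f x + (hyers_seq f n x - f x)) \<longlonglongrightarrow> f x + suminf d"
    by (intro tendsto_add tendsto_const) simp
  then have "(\<lambda>n. hyers_seq f n x) \<longlonglongrightarrow> f x + suminf d" by simp
  moreover from this have limit: "hyers_limit f x = f x + suminf d"
    unfolding hyers_limit_def by (rule limI)
  ultimately show "(\<lambda>n. hyers_seq f n x) \<longlonglongrightarrow> hyers_limit f x" by simp
  have "norm (f x - hyers_limit f x) = norm (suminf d)" by (simp add: limit)
  also have "\<dots> \<le> (\<Sum>n. norm (d n))" by (rule summable_norm[OF summable_norm_d])
  also have "\<dots> \<le> (\<Sum>n. (1/2) * ((1/2)^n * \<psi> (2^n *\<^sub>R x)))"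
    by (rule suminf_le[OF norm_d summable_norm_d summable_half])
  also have "\<dots> = (1/2) * (\<Sum>n. (1/2)^n * \<psi> (2^n *\<^sub>R x))"
    by (rule suminf_mult[OF summable])
  finally show "norm (f x - hyers_limit f x) \<le> (1/2) * (\<Sum>n. (1/2)^n * \<psi> (2^n *\<^sub>R x))" .
qed

lemma limit_eq_0_if_summable_majorant:
  fixes X :: "nat \<Rightarrow> 'b::real_normed_vector"
  assumes "X \<longlonglongrightarrow> L" and "\<And>n. norm (X n) \<le> a n" and "summable a"
  shows "L = 0"
proof -
  have "X \<longlonglongrightarrow> 0"
    using assms(2) by (intro Lim_null_comparison[OF _ summable_LIMSEQ_zero[OF assms(3)]]) auto
  with assms(1) show ?thesis by (rule LIMSEQ_unique)
qed

lemma hyers_limit_add_if_approx_additive: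
  fixes f :: "'a::real_vector \<Rightarrow> 'b::real_normed_vector"
  assumes "\<And>z. z \<in> {x, y, x + y} \<Longrightarrow> (\<lambda>n. hyers_seq f n z) \<longlonglongrightarrow> hyers_limit f z"
    and "\<And>n. norm (f (2^n *\<^sub>R x + 2^n *\<^sub>R y) - f (2^n *\<^sub>R x) - f (2^n *\<^sub>R y)) \<le> \<psi> n"
    and "summable (\<lambda>n. (1/2)^n * \<psi> n)"
  shows "hyers_limit f (x + y) = hyers_limit f x + hyers_limit f y"
proof -
  have "(\<lambda>n. hyers_seq f n (x + y) - hyers_seq f n x - hyers_seq f n y)
      \<longlonglongrightarrow> hyers_limit f (x + y) - hyers_limit f x - hyers_limit f y"
    by (intro tendsto_diff assms(1)) auto
  moreover have "norm (hyers_seq f n (x + y) - hyers_seq f n x - hyers_seq f n y) \<le> (1/2)^n * \<psi> n" for n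
    using mult_left_mono[OF assms(2)[of n], of "(1/2)^n"]
    by (simp add: hyers_seq_def scaleR_add_right flip: scaleR_diff_right)
  ultimately have "hyers_limit f (x + y) - hyers_limit f x - hyers_limit f y = 0"
    using assms(3) by (rule limit_eq_0_if_summable_majorant)
  then show ?thesis by (simp add: algebra_simps)
qed

lemma hyers_limit_commute_if_approx_commute:
  fixes f :: "'a::real_vector \<Rightarrow> 'b::real_normed_vector"
  assumes "linear L" and "bounded_linear L'"
    and "\<And>z. z \<in> {x, L x} \<Longrightarrow> (\<lambda>n. hyers_seq f n z) \<longlonglongrightarrow> hyers_limit f z"
    and "\<And>n. norm (f (L (2^n *\<^sub>R x)) - L' (f (2^n *\<^sub>R x))) \<le> \<psi> n"
    and "summable (\<lambda>n. (1/2)^n * \<psi> n)"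
  shows "hyers_limit f (L x) = L' (hyers_limit f x)"
proof -
  have "(\<lambda>n. hyers_seq f n (L x) - L' (hyers_seq f n x)) \<longlonglongrightarrow> hyers_limit f (L x) - L' (hyers_limit f x)"
    by (intro tendsto_diff bounded_linear.tendsto[OF assms(2)] assms(3)) auto
  moreover have "norm (hyers_seq f n (L x) - L' (hyers_seq f n x)) \<le> (1/2)^n * \<psi> n" for n
    using mult_left_mono[OF assms(4)[of n], of "(1/2)^n"]
    by (simp add: hyers_seq_def linear_scale[OF assms(1)] linear_scale[OF bounded_linear.linear[OF assms(2)]]
        flip: scaleR_diff_right)
  ultimately have "hyers_limit f (L x) - L' (hyers_limit f x) = 0"
    using assms(5) by (rule limit_eq_0_if_summable_majorant)
  then show ?thesis by simp
qed

lemma hyers_limit_triple_if_approx_triple: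
  fixes f :: "'a::cstar_algebra \<Rightarrow> 'b::cstar_algebra"
  assumes "\<And>x. x \<in> {z, z * star z * z} \<Longrightarrow> (\<lambda>n. hyers_seq f n x) \<longlonglongrightarrow> hyers_limit f x"
    and "\<And>n. norm (f ((2^n *\<^sub>R z) * star (2^n *\<^sub>R z) * (2^n *\<^sub>R z))
                     - f (2^n *\<^sub>R z) * star (f (2^n *\<^sub>R z)) * f (2^n *\<^sub>R z)) \<le> \<psi> n"
    and "summable (\<lambda>n. (1/2)^n * \<psi> n)"
  shows "hyers_limit f (z * star z * z)
           = hyers_limit f z * star (hyers_limit f z) * hyers_limit f z"
proof -
  let ?w = "z * star z * z"
  \<comment> \<open>The triple product is homogeneous of degree 3, so the triple of the \<open>n\<close>-th term at \<open>z\<close>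
    is compared with the \<open>3 * n\<close>-th term at \<open>?w\<close>.\<close>
  let ?X = "\<lambda>n. hyers_seq f (3 * n) ?w - hyers_seq f n z * star (hyers_seq f n z) * hyers_seq f n z"
  have "(\<lambda>n. hyers_seq f n ?w) \<longlonglongrightarrow> hyers_limit f ?w" by (rule assms(1)) simp
  moreover have "strict_mono (\<lambda>n::nat. 3 * n)" by (rule strict_monoI) simp
  ultimately have "(\<lambda>n. hyers_seq f (3 * n) ?w) \<longlonglongrightarrow> hyers_limit f ?w"
    using LIMSEQ_subseq_LIMSEQ by (fastforce simp: o_def)
  then have "?X \<longlonglongrightarrow> hyers_limit f ?w - hyers_limit f z * star (hyers_limit f z) * hyers_limit f z"
    by (intro tendsto_diff tendsto_mult assms(1) bounded_linear.tendsto[OF bounded_linear_star]) auto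
  moreover have "norm (?X n) \<le> (1/2)^n * \<psi> n" for n
  proof -
    have "?X n = (1/2)^(3 * n) *\<^sub>R (f ((2^n *\<^sub>R z) * star (2^n *\<^sub>R z) * (2^n *\<^sub>R z))
                     - f (2^n *\<^sub>R z) * star (f (2^n *\<^sub>R z)) * f (2^n *\<^sub>R z))"
      by (simp add: hyers_seq_def star_scaleR scaleR_diff_right power_mult power3_eq_cube mult.commute)
    then have "norm (?X n) \<le> (1/2)^(3 * n) * \<psi> n"
      using mult_left_mono[OF assms(2)[of n], of "(1/2)^(3 * n)"] by simp
    also have "\<dots> \<le> (1/2)^n * \<psi> n"
      using order_trans[OF norm_ge_zero assms(2)[of n]]
      by (intro mult_right_mono power_decreasing) auto
    finally show ?thesis .
  qed
  ultimately have "hyers_limit f ?w - hyers_limit f z * star (hyers_limit f z) * hyers_limit f z = 0"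
    using assms(3) by (rule limit_eq_0_if_summable_majorant)
  then show ?thesis by simp
qed

lemma scaled_phi_tilde_tendsto_0:
  assumes summable: "summable (\<lambda>n. (1/2)^n * \<phi> (2^n *\<^sub>R x) (2^n *\<^sub>R y) (2^n *\<^sub>R z))"
  shows "(\<lambda>n. (1/2)^n * phi_tilde \<phi> (2^n *\<^sub>R x) (2^n *\<^sub>R y) (2^n *\<^sub>R z)) \<longlonglongrightarrow> 0"
proof -
  define a where "a = (\<lambda>n. (1/2)^n * \<phi> (2^n *\<^sub>R x) (2^n *\<^sub>R y) (2^n *\<^sub>R z))"
  have "summable a" using summable by (simp only: a_def)
  have scaled_eq: "(1/2)^n * phi_tilde \<phi> (2^n *\<^sub>R x) (2^n *\<^sub>R y) (2^n *\<^sub>R z) = (1/2) * (\<Sum>k. a (k + n))" for n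
  proof -
    have tail: "summable (\<lambda>k. a (k + n))"
      using \<open>summable a\<close> by (rule summable_ignore_initial_segment)
    have "(\<Sum>k. a (k + n)) = (1/2)^n * (\<Sum>k. (1/2)^k *
            \<phi> (2^k *\<^sub>R 2^n *\<^sub>R x) (2^k *\<^sub>R 2^n *\<^sub>R y) (2^k *\<^sub>R 2^n *\<^sub>R z))"
      using suminf_mult[OF tail, of "2^n"]
      by (simp add: a_def power_add mult_ac field_simps)
    then show ?thesis by (simp add: phi_tilde_def)
  qed
  have "(\<lambda>n. \<Sum>k. a (k + n)) \<longlonglongrightarrow> 0"
  proof -
    from \<open>summable a\<close> have "(\<lambda>n. suminf a - (\<Sum>k<n. a k)) \<longlonglongrightarrow> suminf a - suminf a"
      by (intro tendsto_diff tendsto_const summable_LIMSEQ)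
    then show ?thesis by (simp add: suminf_minus_initial_segment[OF \<open>summable a\<close>])
  qed
  then have "(\<lambda>n. (1/2) * (\<Sum>k. a (k + n))) \<longlonglongrightarrow> 0"
    by (rule tendsto_mult_right_zero)
  then show ?thesis by (simp only: scaled_eq)
qed

lemma homogeneous_approximation_unique:
  fixes T T' :: "'a::real_vector \<Rightarrow> 'b::real_normed_vector"
  assumes "\<And>r. T (r *\<^sub>R x) = r *\<^sub>R T x" and "\<And>r. T' (r *\<^sub>R x) = r *\<^sub>R T' x"
    and "\<And>n. norm (f (2^n *\<^sub>R x) - T (2^n *\<^sub>R x)) \<le> \<psi> n"
    and "\<And>n. norm (f (2^n *\<^sub>R x) - T' (2^n *\<^sub>R x)) \<le> \<psi> n"
    and "(\<lambda>n. (1/2)^n * \<psi> n) \<longlonglongrightarrow> 0"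
  shows "T' x = T x"
proof -
  have "norm (T' x - T x) \<le> 2 * ((1/2)^n * \<psi> n)" for n
  proof -
    define y where "y = (2::real)^n *\<^sub>R x"
    have "T' x - T x = (1/2)^n *\<^sub>R ((f y - T y) - (f y - T' y))"
      by (simp add: y_def assms(1,2) scaleR_diff_right flip: power_mult_distrib)
    moreover have "norm ((f y - T y) - (f y - T' y)) \<le> \<psi> n + \<psi> n"
      unfolding y_def by (rule norm_triangle_le_diff[OF add_mono[OF assms(3,4)]])
    ultimately show ?thesis by (simp add: mult_left_mono)
  qed
  moreover have "(\<lambda>n. 2 * ((1/2)^n * \<psi> n)) \<longlonglongrightarrow> 0"
    using tendsto_mult_right_zero[OF assms(5)] by simp
  ultimately have "norm (T' x - T x) \<le> 0"
    by (intro LIMSEQ_le_const[of "\<lambda>n. 2 * ((1/2)^n * \<psi> n)"]) auto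
  then show ?thesis by simp
qed

locale approx_jstar_hom =
  fixes A :: "'a::cstar_algebra set" and B :: "'b::cstar_algebra set"
    and h :: "'a \<Rightarrow> 'b" and \<phi> :: "'a \<Rightarrow> 'a \<Rightarrow> 'a \<Rightarrow> real"
  assumes jstar_A: "jstar_algebra A" and jstar_B: "jstar_algebra B"
    and h_in_B: "x \<in> A \<Longrightarrow> h x \<in> B"
    and h_zero: "h 0 = 0"
    and summable_\<phi>: "\<lbrakk>x \<in> A; y \<in> A; z \<in> A\<rbrakk> \<Longrightarrow>
           summable (\<lambda>n. (1/2)^n * \<phi> (2^n *\<^sub>R x) (2^n *\<^sub>R y) (2^n *\<^sub>R z))"
    and approx: "\<lbrakk>\<mu> \<in> {1, \<i>}; x \<in> A; y \<in> A; z \<in> A\<rbrakk> \<Longrightarrow>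
           norm (h (scaleC \<mu> x + scaleC \<mu> y + z * star z * z) - scaleC \<mu> (h x)
                 - scaleC \<mu> (h y) - h z * star (h z) * h z) \<le> \<phi> x y z"
    and continuous_on_line: "x \<in> A \<Longrightarrow> continuous_on UNIV (\<lambda>t::real. h (t *\<^sub>R x))"
begin

lemma approx_add: "x \<in> A \<Longrightarrow> y \<in> A \<Longrightarrow> norm (h (x + y) - h x - h y) \<le> \<phi> x y 0"
  using approx[of 1 x y 0] by (simp add: h_zero scaleC_one jstar_algebra_zero[OF jstar_A])

lemma approx_scaleC_i: "x \<in> A \<Longrightarrow> norm (h (scaleC \<i> x) - scaleC \<i> (h x)) \<le> \<phi> x 0 0"
  using approx[of \<i> x 0 0] by (simp add: h_zero jstar_algebra_zero[OF jstar_A])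

lemma approx_triple:
  "z \<in> A \<Longrightarrow> norm (h (z * star z * z) - h z * star (h z) * h z) \<le> \<phi> 0 0 z"
  using approx[of 1 0 0 z] by (simp add: h_zero scaleC_one jstar_algebra_zero[OF jstar_A])

lemma hyers_seq_tendsto_and_estimate:
  assumes "x \<in> A"
  shows "(\<lambda>n. hyers_seq h n x) \<longlonglongrightarrow> hyers_limit h x"
    and "norm (h x - hyers_limit h x) \<le> phi_tilde \<phi> x x 0"
proof -
  have "norm (h (2 *\<^sub>R y) - 2 *\<^sub>R h y) \<le> \<phi> y y 0" if "y \<in> A" for y
    using approx_add[OF that that] by (simp add: scaleR_2 diff_diff_eq)
  then have doubling: "norm (h (2 *\<^sub>R (2^n *\<^sub>R x)) - 2 *\<^sub>R h (2^n *\<^sub>R x))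
      \<le> \<phi> (2^n *\<^sub>R x) (2^n *\<^sub>R x) 0" for n
    using assms jstar_algebra_scaleR[OF jstar_A] by blast
  have summable: "summable (\<lambda>n. (1/2)^n * \<phi> (2^n *\<^sub>R x) (2^n *\<^sub>R x) 0)"
    using summable_\<phi>[OF assms assms jstar_algebra_zero[OF jstar_A]] by simp
  show "(\<lambda>n. hyers_seq h n x) \<longlonglongrightarrow> hyers_limit h x"
    by (rule hyers_seq_converges(1)[OF doubling summable])
  show "norm (h x - hyers_limit h x) \<le> phi_tilde \<phi> x x 0"
    using hyers_seq_converges(2)[OF doubling summable] by (simp add: phi_tilde_def)
qed

lemmas hyers_seq_tendsto = hyers_seq_tendsto_and_estimate(1)
   and norm_diff_hyers_limit_le = hyers_seq_tendsto_and_estimate(2)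

lemma hyers_limit_in_B:
  assumes "x \<in> A"
  shows "hyers_limit h x \<in> B"
proof -
  have "hyers_seq h n x \<in> B" for n
    using assms jstar_algebra_scaleR[OF jstar_A] jstar_algebra_scaleR[OF jstar_B]
    by (simp add: hyers_seq_def h_in_B)
  then show ?thesis
    using jstar_algebra_closed[OF jstar_B] hyers_seq_tendsto[OF assms] by (metis closed_sequentially)
qed

lemma hyers_limit_add:
  assumes "x \<in> A" and "y \<in> A"
  shows "hyers_limit h (x + y) = hyers_limit h x + hyers_limit h y"
proof (rule hyers_limit_add_if_approx_additive)
  show "(\<lambda>n. hyers_seq h n z) \<longlonglongrightarrow> hyers_limit h z" if "z \<in> {x, y, x + y}" for z
    using that assms jstar_algebra_add[OF jstar_A] hyers_seq_tendsto by blast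
  show "norm (h (2^n *\<^sub>R x + 2^n *\<^sub>R y) - h (2^n *\<^sub>R x) - h (2^n *\<^sub>R y))
      \<le> \<phi> (2^n *\<^sub>R x) (2^n *\<^sub>R y) (2^n *\<^sub>R 0)" for n
    using approx_add[OF jstar_algebra_scaleR[OF jstar_A assms(1)] jstar_algebra_scaleR[OF jstar_A assms(2)]]
    by simp
  show "summable (\<lambda>n. (1/2)^n * \<phi> (2^n *\<^sub>R x) (2^n *\<^sub>R y) (2^n *\<^sub>R 0))"
    using assms jstar_algebra_zero[OF jstar_A] by (rule summable_\<phi>)
qed

lemma hyers_limit_scaleC_i:
  assumes "x \<in> A"
  shows "hyers_limit h (scaleC \<i> x) = scaleC \<i> (hyers_limit h x)"
proof (rule hyers_limit_commute_if_approx_commute)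
  show "linear (scaleC \<i> :: 'a \<Rightarrow> 'a)" "bounded_linear (scaleC \<i> :: 'b \<Rightarrow> 'b)"
    using bounded_linear_scaleC bounded_linear.linear by blast+
  show "(\<lambda>n. hyers_seq h n z) \<longlonglongrightarrow> hyers_limit h z" if "z \<in> {x, scaleC \<i> x}" for z
    using that assms jstar_algebra_scaleC[OF jstar_A] hyers_seq_tendsto by blast
  show "norm (h (scaleC \<i> (2^n *\<^sub>R x)) - scaleC \<i> (h (2^n *\<^sub>R x)))
      \<le> \<phi> (2^n *\<^sub>R x) (2^n *\<^sub>R 0) (2^n *\<^sub>R 0)" for n
    using approx_scaleC_i[OF jstar_algebra_scaleR[OF jstar_A assms]] by (simp only: scaleR_zero_right)
  show "summable (\<lambda>n. (1/2)^n * \<phi> (2^n *\<^sub>R x) (2^n *\<^sub>R 0) (2^n *\<^sub>R 0))"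
    using assms jstar_algebra_zero[OF jstar_A] jstar_algebra_zero[OF jstar_A] by (rule summable_\<phi>)
qed

lemma hyers_limit_scaleR:
  assumes "x \<in> A"
  shows "hyers_limit h (r *\<^sub>R x) = r *\<^sub>R hyers_limit h x"
proof -
  define G where "G t = hyers_limit h (t *\<^sub>R x)" for t
  have "G (s + t) = G s + G t" for s t
    using assms jstar_algebra_scaleR[OF jstar_A] by (simp add: G_def scaleR_add_left hyers_limit_add)
  moreover have "continuous_on UNIV (\<lambda>t. hyers_seq h n (t *\<^sub>R x))" for n
  proof -
    have "continuous_on UNIV (\<lambda>t. h ((2^n * t) *\<^sub>R x))"
      by (rule continuous_on_compose2[OF continuous_on_line[OF assms]]) (auto intro!: continuous_intros)
    then show ?thesis
      unfolding hyers_seq_def scaleR_scaleR by (intro continuous_on_scaleR continuous_on_const)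
  qed
  moreover have "(\<lambda>n. hyers_seq h n (t *\<^sub>R x)) \<longlonglongrightarrow> G t" for t
    unfolding G_def by (rule hyers_seq_tendsto[OF jstar_algebra_scaleR[OF jstar_A assms]])
  ultimately have "G r = r *\<^sub>R G 1"
    by (rule additive_limit_of_continuous_imp_linear)
  then show ?thesis by (simp add: G_def)
qed

lemma hyers_limit_scaleC:
  assumes "x \<in> A"
  shows "hyers_limit h (scaleC c x) = scaleC c (hyers_limit h x)"
  using assms jstar_algebra_scaleR[OF jstar_A] jstar_algebra_scaleC[OF jstar_A]
  by (simp add: scaleC_eq_Re_Im[of c] hyers_limit_add hyers_limit_scaleR hyers_limit_scaleC_i)

lemma hyers_limit_triple:
  assumes "z \<in> A"
  shows "hyers_limit h (z * star z * z) = hyers_limit h z * star (hyers_limit h z) * hyers_limit h z"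
proof (rule hyers_limit_triple_if_approx_triple)
  show "(\<lambda>n. hyers_seq h n x) \<longlonglongrightarrow> hyers_limit h x" if "x \<in> {z, z * star z * z}" for x
    using that assms jstar_algebra_triple[OF jstar_A] hyers_seq_tendsto by blast
  show "norm (h ((2^n *\<^sub>R z) * star (2^n *\<^sub>R z) * (2^n *\<^sub>R z))
      - h (2^n *\<^sub>R z) * star (h (2^n *\<^sub>R z)) * h (2^n *\<^sub>R z)) \<le> \<phi> (2^n *\<^sub>R 0) (2^n *\<^sub>R 0) (2^n *\<^sub>R z)" for n
    using approx_triple[OF jstar_algebra_scaleR[OF jstar_A assms]] by (simp only: scaleR_zero_right)
  show "summable (\<lambda>n. (1/2)^n * \<phi> (2^n *\<^sub>R 0) (2^n *\<^sub>R 0) (2^n *\<^sub>R z))"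
    using jstar_algebra_zero[OF jstar_A] jstar_algebra_zero[OF jstar_A] assms by (rule summable_\<phi>)
qed

lemma jstar_hom_hyers_limit: "jstar_hom A B (hyers_limit h)"
  unfolding jstar_hom_def
  using hyers_limit_in_B hyers_limit_add hyers_limit_scaleC hyers_limit_triple by blast

lemma jstar_hom_approx_unique:
  assumes "jstar_hom A B T" and "\<And>x. x \<in> A \<Longrightarrow> norm (h x - T x) \<le> phi_tilde \<phi> x x 0"
    and "x \<in> A"
  shows "T x = hyers_limit h x"
proof (rule homogeneous_approximation_unique[where f=h
    and \<psi>="\<lambda>n. phi_tilde \<phi> (2^n *\<^sub>R x) (2^n *\<^sub>R x) (2^n *\<^sub>R 0)"])
  show "hyers_limit h (r *\<^sub>R x) = r *\<^sub>R hyers_limit h x" "T (r *\<^sub>R x) = r *\<^sub>R T x" for r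
    using assms jstar_hom_scaleR hyers_limit_scaleR by blast+
  show "norm (h (2^n *\<^sub>R x) - hyers_limit h (2^n *\<^sub>R x)) \<le> phi_tilde \<phi> (2^n *\<^sub>R x) (2^n *\<^sub>R x) (2^n *\<^sub>R 0)"
    "norm (h (2^n *\<^sub>R x) - T (2^n *\<^sub>R x)) \<le> phi_tilde \<phi> (2^n *\<^sub>R x) (2^n *\<^sub>R x) (2^n *\<^sub>R 0)" for n
    using assms(2,3) jstar_algebra_scaleR[OF jstar_A] norm_diff_hyers_limit_le by simp_all
  show "(\<lambda>n. (1/2)^n * phi_tilde \<phi> (2^n *\<^sub>R x) (2^n *\<^sub>R x) (2^n *\<^sub>R 0)) \<longlonglongrightarrow> 0"
    using assms(3) assms(3) jstar_algebra_zero[OF jstar_A]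
    by (intro scaled_phi_tilde_tendsto_0 summable_\<phi>)
qed

end

theorem theorem2p5:
  fixes A :: "'a::cstar_algebra set" and B :: "'b::cstar_algebra set"
    and h :: "'a \<Rightarrow> 'b" and \<phi> :: "'a \<Rightarrow> 'a \<Rightarrow> 'a \<Rightarrow> real"
  assumes "jstar_algebra A" and "jstar_algebra B"
    and "\<forall>x\<in>A. h x \<in> B"
    and "h 0 = 0"
    and "\<forall>x\<in>A. \<forall>y\<in>A. \<forall>z\<in>A. \<phi> x y z \<ge> 0"
    and "\<forall>x\<in>A. \<forall>y\<in>A. \<forall>z\<in>A.
           summable (\<lambda>n. (1/2)^n * \<phi> ((2^n) *\<^sub>R x) ((2^n) *\<^sub>R y) ((2^n) *\<^sub>R z))"
    and "\<forall>\<mu>\<in>{1, \<i>}. \<forall>x\<in>A. \<forall>y\<in>A. \<forall>z\<in>A.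
           norm (h (scaleC \<mu> x + scaleC \<mu> y + z * star z * z) - scaleC \<mu> (h x)
                 - scaleC \<mu> (h y) - h z * star (h z) * h z) \<le> \<phi> x y z"
    and "\<forall>x\<in>A. continuous_on UNIV (\<lambda>t::real. h (t *\<^sub>R x))"
  shows "\<exists>T. jstar_hom A B T \<and> (\<forall>x\<in>A. norm (h x - T x) \<le> phi_tilde \<phi> x x 0)
           \<and> (\<forall>T'. jstar_hom A B T' \<and> (\<forall>x\<in>A. norm (h x - T' x) \<le> phi_tilde \<phi> x x 0)
                  \<longrightarrow> (\<forall>x\<in>A. T' x = T x))"
proof -
  interpret approx_jstar_hom A B h \<phi>
    using assms(1-4,6-8) by unfold_locales auto
  show ?thesis
    using jstar_hom_hyers_limit norm_diff_hyers_limit_le jstar_hom_approx_unique by blast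
qed

end
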